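(* Let $\Lambda$ be a row-finite source-free $k$-graph, fix $J=(j_1,\ldots,j_k)$ with all $j_s\ge1$, and let $\Lambda_A$ be the associated $1$-graph, with $*$-homomorphism $\varphi_A: C^*(\Lambda_A)\to C^*(\Lambda)$ satisfying $\varphi_A(s_{\lambda_A})=s_{\tilde\lambda_A}$. Let $\pi: C^*(\Lambda)\to B(L^2(\Lambda^\infty,\mu_\pi))$ be a monic representation of $C^*(\Lambda)$ and set $\pi_A:=\pi\circ\varphi_A$. If $\pi_A$ is irreducible, then $\pi$ is irreducible.
   Context: A $k$-graph is a countable small category $\Lambda$ with a functor $d:\Lambda\to\mathbb{N}^k$ with unique factorization; vertices $\Lambda^0$, range/source $r,s$; row-finite and source-free mean $v\Lambda^n$ is finite and nonempty for all $v,n$. $C^*(\Lambda)$ is the universal $C^*$-algebra generated by a Cuntz–Krieger $\Lambda$-family $\{s_\lambda\}$ (orthogonal vertex projections, $s_\lambda s_\eta=s_{\lambda\eta}$, $s_\lambda^*s_\lambda=s_{s(\lambda)}$, $s_v=\sum_{\lambda\in v\Lambda^n}s_\lambda s_\lambda^*$); for a 1-graph this is the usual graph $C^*$-algebra. For $1\le i\le k$ let $A_i$ be the $\Lambda^0\times\Lambda^0$ matrix $A_i(v,w)=|v\Lambda^{e_i}w|$ and $A=A_1^{j_1}\cdots A_k^{j_k}$. $\Lambda_A$ is the row-finite 1-graph with adjacency matrix $A$: vertex set $\Lambda^0$ and edge set identified with the paths in $\Lambda$ of degree $J$ (with the same range and source); by unique factorization each path $\lambda_A$ of length $n$ in $\Lambda_A$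 corresponds to a path $\tilde\lambda_A\in\Lambda$ of degree $nJ$. A representation $\{t_\lambda\}$ on $\mathcal H$ is monic if all $t_\lambda\ne0$ and there is $\xi$ with $\overline{\mathrm{span}}\{t_\lambda t_\lambda^*\xi\}=\mathcal H$; $\mu_\pi$ is the measure on the infinite path space $\Lambda^\infty$ determined by $\mu_\pi(Z(\lambda))=\langle\xi,t_\lambda t_\lambda^*\xi\rangle$, where $Z(\lambda)$ is the cylinder set of infinite paths beginning with $\lambda$. *)

theory Defs
  imports "HOL-Analysis.Analysis"
begin

text \<open>A k-graph: a countable small category (objects of type 'v, morphisms of type 'p)
  with a degree functor into N^k (elements of N^k are functions nat => nat vanishing
  outside {..<k}) having the unique factorisation property.
  comp l m is the composite l m, defined when src l = rng m.\<close>

record ('v, 'p) kgraph =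
  vert  :: "'v set"
  mor   :: "'p set"
  rng   :: "'p \<Rightarrow> 'v"
  src   :: "'p \<Rightarrow> 'v"
  ident :: "'v \<Rightarrow> 'p"
  comp  :: "'p \<Rightarrow> 'p \<Rightarrow> 'p"
  deg   :: "'p \<Rightarrow> nat \<Rightarrow> nat"

definition in_Nk :: "nat \<Rightarrow> (nat \<Rightarrow> nat) \<Rightarrow> bool" where
  "in_Nk k n \<longleftrightarrow> (\<forall>i\<ge>k. n i = 0)"

definition is_kgraph :: "nat \<Rightarrow> ('v, 'p) kgraph \<Rightarrow> bool" where
  "is_kgraph k G \<longleftrightarrow>
     countable (mor G) \<and> countable (vert G) \<and>
     (\<forall>l\<in>mor G. rng G l \<in> vert G \<and> src G l \<in> vert G) \<and>
     (\<forall>v\<in>vert G. ident G v \<in> mor G \<and> rng G (ident G v) = v \<and> src G (ident G v) = v) \<and>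
     (\<forall>l\<in>mor G. \<forall>m\<in>mor G. src G l = rng G m \<longrightarrow>
        comp G l m \<in> mor G \<and> rng G (comp G l m) = rng G l \<and> src G (comp G l m) = src G m) \<and>
     (\<forall>l\<in>mor G. comp G (ident G (rng G l)) l = l \<and> comp G l (ident G (src G l)) = l) \<and>
     (\<forall>l\<in>mor G. \<forall>m\<in>mor G. \<forall>n\<in>mor G. src G l = rng G m \<longrightarrow> src G m = rng G n \<longrightarrow>
        comp G (comp G l m) n = comp G l (comp G m n)) \<and>
     (\<forall>l\<in>mor G. in_Nk k (deg G l)) \<and>
     (\<forall>v\<in>vert G. deg G (ident G v) = (\<lambda>i. 0)) \<and>
     (\<forall>l\<in>mor G. \<forall>m\<in>mor G. src G l = rng G m \<longrightarrow> deg G (comp G l m) = (\<lambda>i. deg G l i + deg G m i)) \<and>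
     (\<forall>l\<in>mor G. \<forall>m n. deg G l = (\<lambda>i. m i + n i) \<longrightarrow>
        (\<exists>!p. fst p \<in> mor G \<and> snd p \<in> mor G \<and> src G (fst p) = rng G (snd p) \<and>
              deg G (fst p) = m \<and> deg G (snd p) = n \<and> comp G (fst p) (snd p) = l))"

definition paths_from :: "('v, 'p) kgraph \<Rightarrow> 'v \<Rightarrow> (nat \<Rightarrow> nat) \<Rightarrow> 'p set" where
  "paths_from G v n = {l \<in> mor G. rng G l = v \<and> deg G l = n}"

definition row_finite_source_free :: "nat \<Rightarrow> ('v, 'p) kgraph \<Rightarrow> bool" where
  "row_finite_source_free k G \<longleftrightarrow>
     (\<forall>v\<in>vert G. \<forall>n. in_Nk k n \<longrightarrow> finite (paths_from G v n) \<and> paths_from G v n \<noteq> {})"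

text \<open>A complex Hilbert space is modelled as a real Hilbert space (type 'h) together with
  an orthogonal complex structure Jc (multiplication by i).  The complex inner product is
  <x,y> = inner x y + i inner x (Jc y); bounded complex-linear operators are the bounded
  real-linear operators commuting with Jc; their (complex) adjoint coincides with the real
  adjoint; closed complex subspaces are closed real subspaces invariant under Jc.\<close>

definition complex_structure :: "('h::real_inner \<Rightarrow> 'h) \<Rightarrow> bool" where
  "complex_structure Jc \<longleftrightarrow> linear Jc \<and> (\<forall>x. Jc (Jc x) = - x) \<and>
     (\<forall>x y. inner (Jc x) (Jc y) = inner x y)"

definition cbounded :: "('h::real_inner \<Rightarrow> 'h) \<Rightarrow> ('h \<Rightarrow> 'h) \<Rightarrow> bool" where
  "cbounded Jc T \<longleftrightarrow> bounded_linear T \<and> (\<forall>x. T (Jc x) = Jc (T x))"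

definition adj :: "('h::real_inner \<Rightarrow> 'h) \<Rightarrow> ('h \<Rightarrow> 'h)" where
  "adj T = (THE S. \<forall>x y. inner (T x) y = inner x (S y))"

definition csubspace :: "('h::real_inner \<Rightarrow> 'h) \<Rightarrow> 'h set \<Rightarrow> bool" where
  "csubspace Jc M \<longleftrightarrow> subspace M \<and> Jc ` M \<subseteq> M"

definition cspan :: "('h::real_inner \<Rightarrow> 'h) \<Rightarrow> 'h set \<Rightarrow> 'h set" where
  "cspan Jc S = span (S \<union> Jc ` S)"

text \<open>A set G of operators generates an irreducible representation of the C*-algebra it
  generates: the space is nonzero and the only closed (complex) subspaces invariant under
  all operators in G and their adjoints are {0} and the whole space.\<close>
definition irreducible_ops :: "('h::real_inner \<Rightarrow> 'h) \<Rightarrow> ('h \<Rightarrow> 'h) set \<Rightarrow> bool" where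
  "irreducible_ops Jc G \<longleftrightarrow> (\<exists>x::'h. x \<noteq> 0) \<and>
     (\<forall>M. csubspace Jc M \<and> closed M \<and> (\<forall>T\<in>G. T ` M \<subseteq> M \<and> adj T ` M \<subseteq> M)
          \<longrightarrow> M = {0} \<or> M = UNIV)"

definition CK_family :: "nat \<Rightarrow> ('v, 'p) kgraph \<Rightarrow> ('h::real_inner \<Rightarrow> 'h) \<Rightarrow> ('p \<Rightarrow> 'h \<Rightarrow> 'h) \<Rightarrow> bool" where
  "CK_family k G Jc t \<longleftrightarrow>
     (\<forall>l\<in>mor G. cbounded Jc (t l)) \<and>
     (\<forall>v\<in>vert G. t (ident G v) \<circ> t (ident G v) = t (ident G v) \<and> adj (t (ident G v)) = t (ident G v)) \<and>
     (\<forall>v\<in>vert G. \<forall>w\<in>vert G. v \<noteq> w \<longrightarrow> t (ident G v) \<circ> t (ident G w) = (\<lambda>x. 0)) \<and>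
     (\<forall>l\<in>mor G. \<forall>m\<in>mor G. src G l = rng G m \<longrightarrow> t l \<circ> t m = t (comp G l m)) \<and>
     (\<forall>l\<in>mor G. adj (t l) \<circ> t l = t (ident G (src G l))) \<and>
     (\<forall>v\<in>vert G. \<forall>n. in_Nk k n \<longrightarrow>
        t (ident G v) = (\<lambda>x. \<Sum>l\<in>paths_from G v n. t l (adj (t l) x)))"

definition monic :: "('v, 'p) kgraph \<Rightarrow> ('h::real_inner \<Rightarrow> 'h) \<Rightarrow> ('p \<Rightarrow> 'h \<Rightarrow> 'h) \<Rightarrow> bool" where
  "monic G Jc t \<longleftrightarrow> (\<forall>l\<in>mor G. t l \<noteq> (\<lambda>x. 0)) \<and>
     (\<exists>xi. closure (cspan Jc ((\<lambda>l. t l (adj (t l) xi)) ` mor G)) = UNIV)"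

text \<open>Paths of Lambda_A of length n are identified with paths of Lambda of degree n*J;
  phi_A maps s_{lambda_A} to s_{tilde lambda_A}.  Hence the image of C*(Lambda_A) under
  pi_A = pi o phi_A is the C*-algebra generated by the t_l with deg l = n*J.\<close>
definition pathsA :: "('v, 'p) kgraph \<Rightarrow> (nat \<Rightarrow> nat) \<Rightarrow> 'p set" where
  "pathsA G J = {l \<in> mor G. \<exists>n::nat. deg G l = (\<lambda>i. n * J i)}"

end

theory Submission
  imports Defs
begin

(* The operators of pi_A = pi o phi_A are among those of pi, so a subspace invariant
   under pi is invariant under pi_A; irreducibility therefore passes from pi_A to pi. *)

lemma irreducible_ops_mono:
  assumes "irreducible_ops Jc S" and "S \<subseteq> T"
  shows "irreducible_ops Jc T"
  using assms unfolding irreducible_ops_def by blast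

lemma pathsA_subset_mor: "pathsA G J \<subseteq> mor G"
  unfolding pathsA_def by blast

theorem proposition4p26:
  fixes k :: nat and G :: "('v, 'p) kgraph" and J :: "nat \<Rightarrow> nat"
    and Jc :: "'h::{real_inner, complete_space} \<Rightarrow> 'h" and t :: "'p \<Rightarrow> 'h \<Rightarrow> 'h"
  assumes "k \<ge> 1"
    and "is_kgraph k G"
    and "row_finite_source_free k G"
    and "in_Nk k J" and "\<forall>i<k. J i \<ge> 1"
    and "complex_structure Jc"
    and "CK_family k G Jc t"
    and "monic G Jc t"
    and "irreducible_ops Jc (t ` pathsA G J)"
  shows "irreducible_ops Jc (t ` mor G)"
proof (rule irreducible_ops_mono)
  show "irreducible_ops Jc (t ` pathsA G J)" by fact
  show "t ` pathsA G J \<subseteq> t ` mor G" using pathsA_subset_mor by (rule image_mono)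
qed

end
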